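(* Let $\epsilon>0$, $\beta\ge 0$, let $M\ge 4$ be an even integer and $N\ge 3$ an integer, and let $\mathcal A$ be the upwind Shishkin-mesh matrix described in the context. Then all nonzero $(N-1)\times(N-1)$ blocks of $\mathcal A$ (namely $A_H,A,A_h,B_H,B,B_h,C_H,C,C_h$) are nonsingular. Moreover, with respect to the matrix $\infty$-norm, \[ \|A_H^{-1}B_H\|_\infty+\|A_H^{-1}C_H\|_\infty\le 1,\quad \|A^{-1}B\|_\infty+\|A^{-1}C\|_\infty\le 1,\quad \|A_h^{-1}B_h\|_\infty+\|A_h^{-1}C_h\|_\infty\le 1, \] and \[ \|B_HA_H^{-1}\|_\infty+\|C_HA_H^{-1}\|_\infty\le 1,\quad \|B_hA_h^{-1}\|_\infty+\|C_hA_h^{-1}\|_\infty\le 1. \]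
   Context: Setting (upwind finite differences on a Shishkin mesh for $-\epsilon\Delta u+u_y+\beta u=f$ on $(0,1)^2$ with Dirichlet data, lexicographic line ordering): let $\tau_y=\min\{1/2,\,2\epsilon\ln M\}$, $H_x=1/N$, $H_y=2(1-\tau_y)/M$, $h_y=2\tau_y/M$, and $m=M/2-1$. Define the scalars $d_H=-\frac{\epsilon}{H_y^2}-\frac1{H_y}$, $d=-\frac{2\epsilon}{H_y(H_y+h_y)}-\frac1{H_y}$, $d_h=-\frac{\epsilon}{h_y^2}-\frac1{h_y}$, $e_H=-\frac{\epsilon}{H_y^2}$, $e=-\frac{2\epsilon}{h_y(H_y+h_y)}$, $e_h=-\frac{\epsilon}{h_y^2}$, and $a_H=\frac{2\epsilon}{H_x^2}+\frac{2\epsilon}{H_y^2}+\frac1{H_y}+\beta$, $a=\frac{2\epsilon}{H_x^2}+\frac{2\epsilon}{H_yh_y}+\frac1{H_y}+\beta$, $a_h=\frac{2\epsilon}{H_x^2}+\frac{2\epsilon}{h_y^2}+\frac1{h_y}+\beta$. With $I$ the identity of size $N-1$, let $C_H=d_HI$, $C=dI$, $C_h=d_hI$, $B_H=e_HI$, $B=eI$, $B_h=e_hI$, and let $A_H$, $A$, $A_h$ be the $(N-1)\times(N-1)$ tridiagonal Toeplitz matrices with off-diagonal entries $-\epsilon/H_x^2$ (both sub- and superdiagonal) and diagonal entries $a_H$, $a$, $a_h$, respectively. Let $\hat A_H$ (resp. $\hat A_h$) be the $m\times m$ block tridiagonal matrix with diagonal blocks $A_H$ (resp. $A_h$), subdiagonal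 blocks $C_H$ (resp. $C_h$) and superdiagonal blocks $B_H$ (resp. $B_h$). Then $\mathcal A=\begin{bmatrix}\hat A_H & e_m\otimes B_H & 0\\ e_m^{T}\otimes C & A & e_1^{T}\otimes B\\ 0 & e_1\otimes C_h & \hat A_h\end{bmatrix}$ of size $(N-1)(M-1)$, where $e_1,e_m$ are the first and last canonical basis vectors of $\mathbb R^m$ and $\otimes$ is the Kronecker product. *)

theory Defs
  imports "Jordan_Normal_Form.Matrix"
begin

definition tau_y :: "real \<Rightarrow> nat \<Rightarrow> real" where
  "tau_y \<epsilon> M = min (1/2) (2 * \<epsilon> * ln (real M))"
definition H_x :: "nat \<Rightarrow> real" where "H_x N = 1 / real N"
definition H_y :: "real \<Rightarrow> nat \<Rightarrow> real" where "H_y \<epsilon> M = 2 * (1 - tau_y \<epsilon> M) / real M"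
definition h_y :: "real \<Rightarrow> nat \<Rightarrow> real" where "h_y \<epsilon> M = 2 * tau_y \<epsilon> M / real M"

definition dH :: "real \<Rightarrow> nat \<Rightarrow> real" where
  "dH \<epsilon> M = - \<epsilon> / (H_y \<epsilon> M)^2 - 1 / H_y \<epsilon> M"
definition dd :: "real \<Rightarrow> nat \<Rightarrow> real" where
  "dd \<epsilon> M = - 2 * \<epsilon> / (H_y \<epsilon> M * (H_y \<epsilon> M + h_y \<epsilon> M)) - 1 / H_y \<epsilon> M"
definition dh :: "real \<Rightarrow> nat \<Rightarrow> real" where
  "dh \<epsilon> M = - \<epsilon> / (h_y \<epsilon> M)^2 - 1 / h_y \<epsilon> M"
definition eH :: "real \<Rightarrow> nat \<Rightarrow> real" where
  "eH \<epsilon> M = - \<epsilon> / (H_y \<epsilon> M)^2"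
definition ee :: "real \<Rightarrow> nat \<Rightarrow> real" where
  "ee \<epsilon> M = - 2 * \<epsilon> / (h_y \<epsilon> M * (H_y \<epsilon> M + h_y \<epsilon> M))"
definition eh :: "real \<Rightarrow> nat \<Rightarrow> real" where
  "eh \<epsilon> M = - \<epsilon> / (h_y \<epsilon> M)^2"
definition aH :: "real \<Rightarrow> real \<Rightarrow> nat \<Rightarrow> nat \<Rightarrow> real" where
  "aH \<epsilon> \<beta> M N = 2 * \<epsilon> / (H_x N)^2 + 2 * \<epsilon> / (H_y \<epsilon> M)^2 + 1 / H_y \<epsilon> M + \<beta>"
definition aa :: "real \<Rightarrow> real \<Rightarrow> nat \<Rightarrow> nat \<Rightarrow> real" where
  "aa \<epsilon> \<beta> M N = 2 * \<epsilon> / (H_x N)^2 + 2 * \<epsilon> / (H_y \<epsilon> M * h_y \<epsilon> M) + 1 / H_y \<epsilon> M + \<beta>"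
definition ah :: "real \<Rightarrow> real \<Rightarrow> nat \<Rightarrow> nat \<Rightarrow> real" where
  "ah \<epsilon> \<beta> M N = 2 * \<epsilon> / (H_x N)^2 + 2 * \<epsilon> / (h_y \<epsilon> M)^2 + 1 / h_y \<epsilon> M + \<beta>"

definition tridiag_toeplitz :: "nat \<Rightarrow> real \<Rightarrow> real \<Rightarrow> real mat" where
  "tridiag_toeplitz n a b = mat n n (\<lambda>(i, j). if i = j then a else if i = j + 1 \<or> j = i + 1 then b else 0)"

definition blkA_H :: "real \<Rightarrow> real \<Rightarrow> nat \<Rightarrow> nat \<Rightarrow> real mat" where
  "blkA_H \<epsilon> \<beta> M N = tridiag_toeplitz (N - 1) (aH \<epsilon> \<beta> M N) (- \<epsilon> / (H_x N)^2)"
definition blkA :: "real \<Rightarrow> real \<Rightarrow> nat \<Rightarrow> nat \<Rightarrow> real mat" where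
  "blkA \<epsilon> \<beta> M N = tridiag_toeplitz (N - 1) (aa \<epsilon> \<beta> M N) (- \<epsilon> / (H_x N)^2)"
definition blkA_h :: "real \<Rightarrow> real \<Rightarrow> nat \<Rightarrow> nat \<Rightarrow> real mat" where
  "blkA_h \<epsilon> \<beta> M N = tridiag_toeplitz (N - 1) (ah \<epsilon> \<beta> M N) (- \<epsilon> / (H_x N)^2)"
definition blkB_H :: "real \<Rightarrow> nat \<Rightarrow> nat \<Rightarrow> real mat" where
  "blkB_H \<epsilon> M N = eH \<epsilon> M \<cdot>\<^sub>m 1\<^sub>m (N - 1)"
definition blkB :: "real \<Rightarrow> nat \<Rightarrow> nat \<Rightarrow> real mat" where
  "blkB \<epsilon> M N = ee \<epsilon> M \<cdot>\<^sub>m 1\<^sub>m (N - 1)"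
definition blkB_h :: "real \<Rightarrow> nat \<Rightarrow> nat \<Rightarrow> real mat" where
  "blkB_h \<epsilon> M N = eh \<epsilon> M \<cdot>\<^sub>m 1\<^sub>m (N - 1)"
definition blkC_H :: "real \<Rightarrow> nat \<Rightarrow> nat \<Rightarrow> real mat" where
  "blkC_H \<epsilon> M N = dH \<epsilon> M \<cdot>\<^sub>m 1\<^sub>m (N - 1)"
definition blkC :: "real \<Rightarrow> nat \<Rightarrow> nat \<Rightarrow> real mat" where
  "blkC \<epsilon> M N = dd \<epsilon> M \<cdot>\<^sub>m 1\<^sub>m (N - 1)"
definition blkC_h :: "real \<Rightarrow> nat \<Rightarrow> nat \<Rightarrow> real mat" where
  "blkC_h \<epsilon> M N = dh \<epsilon> M \<cdot>\<^sub>m 1\<^sub>m (N - 1)"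

definition mat_inv :: "real mat \<Rightarrow> real mat" where
  "mat_inv A = (SOME B. inverts_mat A B \<and> inverts_mat B A)"

definition norm_inf :: "real mat \<Rightarrow> real" where
  "norm_inf A = Max ((\<lambda>i. \<Sum>j<dim_col A. \<bar>A $$ (i, j)\<bar>) ` {..<dim_row A})"

end

theory Submission
  imports Defs "Jordan_Normal_Form.Determinant"
begin

(* Each diagonal block is a tridiagonal Toeplitz matrix whose diagonal exceeds its two
   off-diagonal entries by exactly |e| + |d| + \<beta>, where e and d are the scalars of the
   neighbouring blocks B = e I and C = d I. Varah's bound for strictly row diagonally
   dominant matrices gives ||A^-1|| \<le> 1/(|e| + |d| + \<beta>) in the \<infinity>-norm, and since B and C
   are scalar, ||A^-1 B|| + ||A^-1 C|| = ||B A^-1|| + ||C A^-1|| = (|e| + |d|) ||A^-1|| \<le> 1. *)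

definition diag_dominant_by :: "real \<Rightarrow> real mat \<Rightarrow> bool" where
  "diag_dominant_by \<delta> A \<longleftrightarrow>
     (\<forall>i<dim_row A. \<delta> \<le> \<bar>A $$ (i, i)\<bar> - (\<Sum>j\<in>{..<dim_col A} - {i}. \<bar>A $$ (i, j)\<bar>))"

lemma diag_dominant_row_bound:
  fixes A :: "real mat"
  assumes A: "A \<in> carrier_mat n n" and dom: "diag_dominant_by \<delta> A"
    and z: "z \<in> carrier_vec n" and i: "i < n" and max: "\<forall>k<n. \<bar>z $ k\<bar> \<le> \<bar>z $ i\<bar>"
  shows "\<delta> * \<bar>z $ i\<bar> \<le> \<bar>(A *\<^sub>v z) $ i\<bar>"
proof -
  let ?off = "\<Sum>j\<in>{..<n} - {i}. A $$ (i, j) * z $ j"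
  let ?off_abs = "\<Sum>j\<in>{..<n} - {i}. \<bar>A $$ (i, j)\<bar>"
  have "(A *\<^sub>v z) $ i = (\<Sum>j<n. A $$ (i, j) * z $ j)"
    using A z i by (simp add: scalar_prod_def lessThan_atLeast0)
  also have "\<dots> = A $$ (i, i) * z $ i + ?off"
    using i by (simp add: sum.remove)
  finally have Az: "(A *\<^sub>v z) $ i = A $$ (i, i) * z $ i + ?off" .
  have "\<bar>?off\<bar> \<le> (\<Sum>j\<in>{..<n} - {i}. \<bar>A $$ (i, j)\<bar> * \<bar>z $ i\<bar>)"
    using max by (intro order.trans[OF sum_abs] sum_mono) (auto simp: abs_mult mult_left_mono)
  also have "\<dots> = ?off_abs * \<bar>z $ i\<bar>"
    by (simp add: sum_distrib_right)
  finally have off: "\<bar>?off\<bar> \<le> ?off_abs * \<bar>z $ i\<bar>" .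
  have "\<delta> * \<bar>z $ i\<bar> \<le> (\<bar>A $$ (i, i)\<bar> - ?off_abs) * \<bar>z $ i\<bar>"
    using dom A i by (intro mult_right_mono) (auto simp: diag_dominant_by_def)
  also have "\<dots> \<le> \<bar>(A *\<^sub>v z) $ i\<bar>"
    unfolding Az using off by (simp add: algebra_simps abs_mult)
  finally show ?thesis .
qed

lemma diag_dominant_vec_bound:
  fixes A :: "real mat"
  assumes A: "A \<in> carrier_mat n n" and \<delta>: "0 < \<delta>" and dom: "diag_dominant_by \<delta> A"
    and z: "z \<in> carrier_vec n" and Az: "\<forall>i<n. \<bar>(A *\<^sub>v z) $ i\<bar> \<le> c" and k: "k < n"
  shows "\<bar>z $ k\<bar> \<le> c / \<delta>"
proof -
  let ?S = "(\<lambda>k. \<bar>z $ k\<bar>) ` {..<n}"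
  have "Max ?S \<in> ?S" using k by (intro Max_in) auto
  then obtain i where i: "i < n" and "\<bar>z $ i\<bar> = Max ?S" by auto
  then have max: "\<forall>k<n. \<bar>z $ k\<bar> \<le> \<bar>z $ i\<bar>" by simp
  have "\<delta> * \<bar>z $ i\<bar> \<le> c"
    using diag_dominant_row_bound[OF A dom z i max] Az[rule_format, OF i] by linarith
  then have "\<bar>z $ i\<bar> \<le> c / \<delta>" using \<delta> by (simp add: field_simps)
  then show ?thesis using max k by fastforce
qed

lemma diag_dominant_invertible:
  fixes A :: "real mat"
  assumes A: "A \<in> carrier_mat n n" and \<delta>: "0 < \<delta>" and dom: "diag_dominant_by \<delta> A"
  shows "invertible_mat A"
proof -
  have "det A \<noteq> 0"
  proof
    assume "det A = 0"
    then obtain v where v: "v \<in> carrier_vec n" "v \<noteq> 0\<^sub>v n" "A *\<^sub>v v = 0\<^sub>v n"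
      using det_0_iff_vec_prod_zero_field[OF A] by auto
    have "\<bar>v $ k\<bar> \<le> 0 / \<delta>" if "k < n" for k
      using diag_dominant_vec_bound[where c = 0, OF A \<delta> dom v(1) _ that] v(3) A by auto
    then have "v = 0\<^sub>v n" using v(1) by (intro eq_vecI) auto
    with v(2) show False by simp
  qed
  then obtain B where "B \<in> carrier_mat n n" "A * B = 1\<^sub>m n" "B * A = 1\<^sub>m n"
    using det_non_zero_imp_unit[OF A, of "()"] unfolding Units_def ring_mat_def by auto
  then show ?thesis using A unfolding invertible_mat_def inverts_mat_def by auto
qed

lemma invertible_mat_inv:
  fixes A :: "real mat"
  assumes A: "A \<in> carrier_mat n n" and inv: "invertible_mat A"
  shows "mat_inv A \<in> carrier_mat n n" "A * mat_inv A = 1\<^sub>m n" "mat_inv A * A = 1\<^sub>m n"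
proof -
  have "\<exists>B. inverts_mat A B \<and> inverts_mat B A"
    using inv unfolding invertible_mat_def by auto
  then have "inverts_mat A (mat_inv A) \<and> inverts_mat (mat_inv A) A"
    unfolding mat_inv_def by (rule someI_ex)
  then have right: "A * mat_inv A = 1\<^sub>m n"
    and left: "mat_inv A * A = 1\<^sub>m (dim_row (mat_inv A))"
    using A unfolding inverts_mat_def by auto
  have "dim_col (mat_inv A) = n" using arg_cong[OF right, of dim_col] by simp
  moreover have "dim_row (mat_inv A) = n" using arg_cong[OF left, of dim_col] A by simp
  ultimately show "mat_inv A \<in> carrier_mat n n" "A * mat_inv A = 1\<^sub>m n" "mat_inv A * A = 1\<^sub>m n"
    using right left by auto
qed

lemma diag_dominant_mat_inv_row_sum_le:
  fixes A :: "real mat"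
  assumes A: "A \<in> carrier_mat n n" and \<delta>: "0 < \<delta>" and dom: "diag_dominant_by \<delta> A"
    and i: "i < n"
  shows "(\<Sum>j<n. \<bar>mat_inv A $$ (i, j)\<bar>) \<le> 1 / \<delta>"
proof -
  define B where "B = mat_inv A"
  have B: "B \<in> carrier_mat n n" "A * B = 1\<^sub>m n"
    using invertible_mat_inv[OF A diag_dominant_invertible[OF A \<delta> dom]] unfolding B_def by auto
  (* Test A^-1 against the sign pattern x of its i-th row: then A z = x with z = A^-1 x,
     and z_i is the i-th absolute row sum of A^-1. *)
  define x where "x = vec n (\<lambda>j. sgn (B $$ (i, j)))"
  define z where "z = B *\<^sub>v x"
  have x: "x \<in> carrier_vec n" and z: "z \<in> carrier_vec n"
    unfolding x_def z_def using B(1) by auto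
  have "A *\<^sub>v z = (A * B) *\<^sub>v x"
    unfolding z_def using assoc_mult_mat_vec[OF A B(1) x] by simp
  then have "A *\<^sub>v z = x" using B(2) x by simp
  then have "\<forall>k<n. \<bar>(A *\<^sub>v z) $ k\<bar> \<le> 1" unfolding x_def by (auto simp: sgn_real_def)
  from diag_dominant_vec_bound[OF A \<delta> dom z this i] have "\<bar>z $ i\<bar> \<le> 1 / \<delta>" .
  moreover have "z $ i = (\<Sum>j<n. B $$ (i, j) * sgn (B $$ (i, j)))"
    unfolding z_def x_def using B(1) i by (simp add: scalar_prod_def lessThan_atLeast0)
  then have "z $ i = (\<Sum>j<n. \<bar>B $$ (i, j)\<bar>)"
    by (simp add: abs_sgn)
  ultimately show ?thesis unfolding B_def by simp
qed

lemma norm_inf_le: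
  assumes "0 < dim_row A" and "\<forall>i<dim_row A. (\<Sum>j<dim_col A. \<bar>A $$ (i, j)\<bar>) \<le> K"
  shows "norm_inf A \<le> K"
  unfolding norm_inf_def using assms by (subst Max_le_iff) auto

lemma norm_inf_smult:
  assumes "0 < dim_row A"
  shows "norm_inf (c \<cdot>\<^sub>m A) = \<bar>c\<bar> * norm_inf A"
proof -
  have "mono (\<lambda>x. \<bar>c\<bar> * x :: real)" by (intro monoI mult_left_mono) auto
  then have "\<bar>c\<bar> * norm_inf A = Max ((\<lambda>i. \<bar>c\<bar> * (\<Sum>j<dim_col A. \<bar>A $$ (i, j)\<bar>)) ` {..<dim_row A})"
    unfolding norm_inf_def using assms by (subst mono_Max_commute) (auto simp: image_image)
  also have "\<dots> = norm_inf (c \<cdot>\<^sub>m A)"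
    unfolding norm_inf_def by (intro arg_cong[where f = Max] image_cong)
      (auto simp: abs_mult sum_distrib_left)
  finally show ?thesis ..
qed

lemma diag_dominant_norm_inf_mat_inv_le:
  fixes A :: "real mat"
  assumes A: "A \<in> carrier_mat n n" and n: "0 < n" and \<delta>: "0 < \<delta>" and dom: "diag_dominant_by \<delta> A"
  shows "norm_inf (mat_inv A) \<le> 1 / \<delta>"
proof -
  have "mat_inv A \<in> carrier_mat n n"
    using invertible_mat_inv[OF A diag_dominant_invertible[OF A \<delta> dom]] by simp
  then show ?thesis
    using n diag_dominant_mat_inv_row_sum_le[OF A \<delta> dom] by (intro norm_inf_le) auto
qed

lemma diag_dominant_scalar_neighbours_norm_inf_le:
  fixes A :: "real mat"
  assumes A: "A \<in> carrier_mat n n" and n: "0 < n" and \<delta>: "0 < \<delta>" and dom: "diag_dominant_by \<delta> A"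
    and ef: "\<bar>e\<bar> + \<bar>f\<bar> \<le> \<delta>"
  shows "norm_inf (mat_inv A * (e \<cdot>\<^sub>m 1\<^sub>m n)) + norm_inf (mat_inv A * (f \<cdot>\<^sub>m 1\<^sub>m n)) \<le> 1"
    and "norm_inf ((e \<cdot>\<^sub>m 1\<^sub>m n) * mat_inv A) + norm_inf ((f \<cdot>\<^sub>m 1\<^sub>m n) * mat_inv A) \<le> 1"
proof -
  have B: "mat_inv A \<in> carrier_mat n n"
    using invertible_mat_inv[OF A diag_dominant_invertible[OF A \<delta> dom]] by simp
  have right: "mat_inv A * (c \<cdot>\<^sub>m 1\<^sub>m n) = c \<cdot>\<^sub>m mat_inv A" for c :: real
    using mult_smult_distrib[OF B, of "1\<^sub>m n" n c] B by simp
  have left: "(c \<cdot>\<^sub>m 1\<^sub>m n) * mat_inv A = c \<cdot>\<^sub>m mat_inv A" for c :: real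
    using mult_smult_assoc_mat[of "1\<^sub>m n" n n "mat_inv A" n c] B by simp
  have scaled: "norm_inf (c \<cdot>\<^sub>m mat_inv A) \<le> \<bar>c\<bar> * (1 / \<delta>)" for c :: real
    using norm_inf_smult[of "mat_inv A" c] diag_dominant_norm_inf_mat_inv_le[OF A n \<delta> dom] B n
    by (simp add: mult_left_mono del: times_divide_eq_right)
  have "\<bar>e\<bar> * (1 / \<delta>) + \<bar>f\<bar> * (1 / \<delta>) \<le> 1"
    using ef \<delta> by (simp add: field_simps)
  then show "norm_inf (mat_inv A * (e \<cdot>\<^sub>m 1\<^sub>m n)) + norm_inf (mat_inv A * (f \<cdot>\<^sub>m 1\<^sub>m n)) \<le> 1"
    and "norm_inf ((e \<cdot>\<^sub>m 1\<^sub>m n) * mat_inv A) + norm_inf ((f \<cdot>\<^sub>m 1\<^sub>m n) * mat_inv A) \<le> 1"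
    unfolding right left using scaled[of e] scaled[of f] by linarith+
qed

lemma tridiag_toeplitz_diag_dominant:
  "diag_dominant_by (a - 2 * \<bar>b\<bar>) (tridiag_toeplitz n a b)"
  unfolding diag_dominant_by_def
proof (intro allI impI)
  let ?T = "tridiag_toeplitz n a b"
  fix i assume "i < dim_row ?T"
  then have i: "i < n" by (simp add: tridiag_toeplitz_def)
  have "(\<Sum>j\<in>{..<n} - {i}. \<bar>?T $$ (i, j)\<bar>)
      \<le> (\<Sum>j\<in>{..<n} - {i}. (if j = i + 1 then \<bar>b\<bar> else 0) + (if j = i - 1 then \<bar>b\<bar> else 0))"
    using i by (intro sum_mono) (auto simp: tridiag_toeplitz_def)
  also have "\<dots> \<le> 2 * \<bar>b\<bar>"
    by (simp add: sum.distrib sum.delta)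
  finally show "a - 2 * \<bar>b\<bar> \<le> \<bar>?T $$ (i, i)\<bar> - (\<Sum>j\<in>{..<dim_col ?T} - {i}. \<bar>?T $$ (i, j)\<bar>)"
    using i by (simp add: tridiag_toeplitz_def)
qed

lemma smult_one_mat_diag_dominant: "diag_dominant_by \<bar>c\<bar> (c \<cdot>\<^sub>m 1\<^sub>m n)"
  unfolding diag_dominant_by_def by simp

lemma tridiag_toeplitz_scalar_neighbours:
  assumes n: "0 < n" and \<beta>: "0 \<le> \<beta>" and ef: "0 < \<bar>e\<bar> + \<bar>f\<bar>"
    and a: "a = 2 * \<bar>b\<bar> + \<bar>e\<bar> + \<bar>f\<bar> + \<beta>"
  defines "T \<equiv> tridiag_toeplitz n a b"
  shows "invertible_mat T
    \<and> norm_inf (mat_inv T * (e \<cdot>\<^sub>m 1\<^sub>m n)) + norm_inf (mat_inv T * (f \<cdot>\<^sub>m 1\<^sub>m n)) \<le> 1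
    \<and> norm_inf ((e \<cdot>\<^sub>m 1\<^sub>m n) * mat_inv T) + norm_inf ((f \<cdot>\<^sub>m 1\<^sub>m n) * mat_inv T) \<le> 1"
proof -
  have T: "T \<in> carrier_mat n n" unfolding T_def by (simp add: tridiag_toeplitz_def)
  have dom: "diag_dominant_by (a - 2 * \<bar>b\<bar>) T"
    unfolding T_def by (rule tridiag_toeplitz_diag_dominant)
  have \<delta>: "0 < a - 2 * \<bar>b\<bar>" and margin: "\<bar>e\<bar> + \<bar>f\<bar> \<le> a - 2 * \<bar>b\<bar>"
    using a ef \<beta> by linarith+
  show ?thesis
    using diag_dominant_invertible[OF T \<delta> dom]
      diag_dominant_scalar_neighbours_norm_inf_le[OF T n \<delta> dom margin] by simp
qed

lemma shishkin_step_sizes_pos: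
  assumes \<epsilon>: "0 < \<epsilon>" and M: "2 \<le> M"
  shows "0 < H_y \<epsilon> M" and "0 < h_y \<epsilon> M"
proof -
  have "0 < ln (real M)" using M by simp
  then have "0 < tau_y \<epsilon> M" "tau_y \<epsilon> M \<le> 1/2" unfolding tau_y_def using \<epsilon> by auto
  then show "0 < H_y \<epsilon> M" "0 < h_y \<epsilon> M" unfolding H_y_def h_y_def using M by auto
qed

lemma shishkin_neighbour_coeffs_neg:
  assumes \<epsilon>: "0 < \<epsilon>" and M: "2 \<le> M"
  shows "eH \<epsilon> M < 0" "dH \<epsilon> M < 0" "ee \<epsilon> M < 0" "dd \<epsilon> M < 0" "eh \<epsilon> M < 0" "dh \<epsilon> M < 0"
proof -
  define H h where "H = H_y \<epsilon> M" and "h = h_y \<epsilon> M"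
  have "0 < H" "0 < h" using shishkin_step_sizes_pos[OF \<epsilon> M] H_def h_def by auto
  then have "0 < \<epsilon> / H^2" "0 < 1 / H" "0 < 2 * \<epsilon> / (h * (H + h))" "0 < 2 * \<epsilon> / (H * (H + h))"
    "0 < \<epsilon> / h^2" "0 < 1 / h"
    using \<epsilon> by auto
  then show "eH \<epsilon> M < 0" "dH \<epsilon> M < 0" "ee \<epsilon> M < 0" "dd \<epsilon> M < 0" "eh \<epsilon> M < 0" "dh \<epsilon> M < 0"
    unfolding eH_def dH_def ee_def dd_def eh_def dh_def H_def[symmetric] h_def[symmetric]
    by (auto intro: order.strict_trans[of _ 0])
qed

lemma shishkin_diagonal_coeffs_eq:
  fixes \<epsilon> \<beta> :: real and M N :: nat
  assumes \<epsilon>: "0 < \<epsilon>" and M: "2 \<le> M"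
  defines "b \<equiv> - \<epsilon> / (H_x N)^2"
  shows "aH \<epsilon> \<beta> M N = 2 * \<bar>b\<bar> + \<bar>eH \<epsilon> M\<bar> + \<bar>dH \<epsilon> M\<bar> + \<beta>"
    and "aa \<epsilon> \<beta> M N = 2 * \<bar>b\<bar> + \<bar>ee \<epsilon> M\<bar> + \<bar>dd \<epsilon> M\<bar> + \<beta>"
    and "ah \<epsilon> \<beta> M N = 2 * \<bar>b\<bar> + \<bar>eh \<epsilon> M\<bar> + \<bar>dh \<epsilon> M\<bar> + \<beta>"
proof -
  define H h where "H = H_y \<epsilon> M" and "h = h_y \<epsilon> M"
  have H: "0 < H" and h: "0 < h" using shishkin_step_sizes_pos[OF \<epsilon> M] H_def h_def by auto
  note neg = shishkin_neighbour_coeffs_neg[OF \<epsilon> M]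
  have b: "\<bar>b\<bar> = \<epsilon> / (H_x N)^2" unfolding b_def using \<epsilon> by simp
  show "aH \<epsilon> \<beta> M N = 2 * \<bar>b\<bar> + \<bar>eH \<epsilon> M\<bar> + \<bar>dH \<epsilon> M\<bar> + \<beta>"
    using neg \<epsilon> H unfolding b aH_def eH_def dH_def H_def[symmetric] by (simp add: field_simps)
  show "ah \<epsilon> \<beta> M N = 2 * \<bar>b\<bar> + \<bar>eh \<epsilon> M\<bar> + \<bar>dh \<epsilon> M\<bar> + \<beta>"
    using neg \<epsilon> h unfolding b ah_def eh_def dh_def h_def[symmetric] by (simp add: field_simps)
  define S where "S = H + h"
  have S: "0 < S" using H h S_def by simp
  have "2 * \<epsilon> / (h * S) + 2 * \<epsilon> / (H * S) = 2 * \<epsilon> * (H + h) / (H * h * S)"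
    using H h S by (simp add: field_simps)
  also have "\<dots> = 2 * \<epsilon> / (H * h)"
    using S unfolding S_def by simp
  finally show "aa \<epsilon> \<beta> M N = 2 * \<bar>b\<bar> + \<bar>ee \<epsilon> M\<bar> + \<bar>dd \<epsilon> M\<bar> + \<beta>"
    using neg \<epsilon> mult_pos_pos[OF h S] unfolding b aa_def ee_def dd_def H_def[symmetric] h_def[symmetric] S_def
    by simp
qed

theorem lemma5p1:
  fixes \<epsilon> \<beta> :: real and M N :: nat
  assumes "\<epsilon> > 0" and "\<beta> \<ge> 0" and "M \<ge> 4" and "even M" and "N \<ge> 3"
  shows "invertible_mat (blkA_H \<epsilon> \<beta> M N) \<and> invertible_mat (blkA \<epsilon> \<beta> M N)
       \<and> invertible_mat (blkA_h \<epsilon> \<beta> M N)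
       \<and> invertible_mat (blkB_H \<epsilon> M N) \<and> invertible_mat (blkB \<epsilon> M N)
       \<and> invertible_mat (blkB_h \<epsilon> M N)
       \<and> invertible_mat (blkC_H \<epsilon> M N) \<and> invertible_mat (blkC \<epsilon> M N)
       \<and> invertible_mat (blkC_h \<epsilon> M N)
       \<and> norm_inf (mat_inv (blkA_H \<epsilon> \<beta> M N) * blkB_H \<epsilon> M N)
         + norm_inf (mat_inv (blkA_H \<epsilon> \<beta> M N) * blkC_H \<epsilon> M N) \<le> 1
       \<and> norm_inf (mat_inv (blkA \<epsilon> \<beta> M N) * blkB \<epsilon> M N)
         + norm_inf (mat_inv (blkA \<epsilon> \<beta> M N) * blkC \<epsilon> M N) \<le> 1
       \<and> norm_inf (mat_inv (blkA_h \<epsilon> \<beta> M N) * blkB_h \<epsilon> M N)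
         + norm_inf (mat_inv (blkA_h \<epsilon> \<beta> M N) * blkC_h \<epsilon> M N) \<le> 1
       \<and> norm_inf (blkB_H \<epsilon> M N * mat_inv (blkA_H \<epsilon> \<beta> M N))
         + norm_inf (blkC_H \<epsilon> M N * mat_inv (blkA_H \<epsilon> \<beta> M N)) \<le> 1
       \<and> norm_inf (blkB_h \<epsilon> M N * mat_inv (blkA_h \<epsilon> \<beta> M N))
         + norm_inf (blkC_h \<epsilon> M N * mat_inv (blkA_h \<epsilon> \<beta> M N)) \<le> 1"
proof -
  have n: "0 < N - 1" and M: "2 \<le> M" using assms by auto
  note neg = shishkin_neighbour_coeffs_neg[OF assms(1) M]
  note diag = shishkin_diagonal_coeffs_eq[OF assms(1) M, where \<beta> = \<beta> and N = N]
  have scalar: "invertible_mat (c \<cdot>\<^sub>m 1\<^sub>m (N - 1))" if "c < 0" for c :: real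
    using diag_dominant_invertible[of "c \<cdot>\<^sub>m 1\<^sub>m (N - 1)" "N - 1" "\<bar>c\<bar>"]
      smult_one_mat_diag_dominant[of c "N - 1"] that by simp
  have "0 < \<bar>eH \<epsilon> M\<bar> + \<bar>dH \<epsilon> M\<bar>" "0 < \<bar>ee \<epsilon> M\<bar> + \<bar>dd \<epsilon> M\<bar>"
    "0 < \<bar>eh \<epsilon> M\<bar> + \<bar>dh \<epsilon> M\<bar>"
    using neg by (simp_all add: add_nonneg_pos)
  note blocks = this[THEN tridiag_toeplitz_scalar_neighbours[OF n assms(2)]]
  show ?thesis
    using blocks(1)[OF diag(1)] blocks(2)[OF diag(2)] blocks(3)[OF diag(3)] neg[THEN scalar]
    unfolding blkA_H_def blkA_def blkA_h_def blkB_H_def blkB_def blkB_h_def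
      blkC_H_def blkC_def blkC_h_def
    by blast
qed

end
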